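(* Let $d$ be a squarefree integer and let $E_d$ be the quadratic twist $dy^2=x^3-35x-98$ of the curve $y^2+xy=x^3-x^2-2x-1$, equivalently (via $(x,y)\mapsto(dx,d^2y)$) the curve $y^2=x^3-35d^2x-98d^3$. Then the torsion subgroup of $E_d(\mathbb{Q})$ is isomorphic to $\mathbb{Z}/2\mathbb{Z}$; in the model $y^2=x^3-35d^2x-98d^3$ it is generated by the point $(7d,0)$. *)

theory Defs
  imports Complex_Main "HOL-Computational_Algebra.Squarefree"
begin

text \<open>Rational points of the short Weierstrass curve y^2 = x^3 + a x + b over Q.
  None is the point at infinity O; Some (x, y) is an affine point.\<close>

type_synonym ec_point = "(rat \<times> rat) option"

definition on_curve :: "rat \<Rightarrow> rat \<Rightarrow> ec_point \<Rightarrow> bool" where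
  "on_curve a b P = (case P of None \<Rightarrow> True
                     | Some (x, y) \<Rightarrow> y^2 = x^3 + a * x + b)"

definition ec_add :: "rat \<Rightarrow> ec_point \<Rightarrow> ec_point \<Rightarrow> ec_point" where
  "ec_add a P Q = (case P of None \<Rightarrow> Q | Some (x1, y1) \<Rightarrow>
     (case Q of None \<Rightarrow> P | Some (x2, y2) \<Rightarrow>
        (if x1 = x2 then
           (if y1 = - y2 then None
            else (let l = (3 * x1^2 + a) / (2 * y1);
                      x3 = l^2 - 2 * x1
                  in Some (x3, l * (x1 - x3) - y1)))
         else (let l = (y2 - y1) / (x2 - x1);
                   x3 = l^2 - x1 - x2
               in Some (x3, l * (x1 - x3) - y1)))))"

primrec ec_mult :: "rat \<Rightarrow> nat \<Rightarrow> ec_point \<Rightarrow> ec_point" where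
  "ec_mult a 0 P = None"
| "ec_mult a (Suc n) P = ec_add a P (ec_mult a n P)"

definition ec_torsion :: "rat \<Rightarrow> rat \<Rightarrow> ec_point set" where
  "ec_torsion a b = {P. on_curve a b P \<and> (\<exists>n>0. ec_mult a n P = None)}"

end

theory Submission
  imports Defs
begin

text \<open>Write \<open>D = d\<close>. Since \<open>x^3 - 35 D^2 x - 98 D^3 = (x - 7 D) (x^2 + 7 D x + 14 D^2)\<close> and the
  quadratic factor has no real root, the only point of order 2 is \<open>T = (7 D, 0)\<close>, and \<open>T\<close> is not
  a double because halving it would produce a rational square root of 7. Any other torsion point
  \<open>P\<close> has a doubling orbit \<open>P, 2 P, 4 P, \<dots>\<close> that stays inside the finite set of multiples of
  \<open>P\<close> and never reaches \<open>O\<close>. In the coordinate \<open>w = (x + D) / (4 D)\<close> doubling becomes the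
  rational map \<open>dup_map\<close>; after at most two steps \<open>w\<close> has a pole at 2, and from then on the
  order of that pole strictly increases, so the orbit is infinite, a contradiction.\<close>

section \<open>The chord-tangent law\<close>

definition ec_rhs :: "rat \<Rightarrow> rat \<Rightarrow> rat \<Rightarrow> rat" where
  "ec_rhs a b x = x^3 + a * x + b"

text \<open>By Vieta, \<open>line_meets a b l c u1 u2 u3\<close> says that \<open>u1, u2, u3\<close> are the roots, with
  multiplicity, of \<open>ec_rhs a b u - (l * u + c)^2\<close>: the x-coordinates of the three points
  where the line \<open>y = l * x + c\<close> meets the curve.\<close>

definition line_meets :: "rat \<Rightarrow> rat \<Rightarrow> rat \<Rightarrow> rat \<Rightarrow> rat \<Rightarrow> rat \<Rightarrow> rat \<Rightarrow> bool" where
  "line_meets a b l c u1 u2 u3 \<longleftrightarrow>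
     u1 + u2 + u3 = l^2 \<and> u1*u2 + u1*u3 + u2*u3 = a - 2*l*c \<and> u1*u2*u3 = c^2 - b"

lemma line_meets_on_curve:
  assumes "line_meets a b l c u1 u2 u3"
  shows "ec_rhs a b u1 = (l*u1 + c)^2" "ec_rhs a b u2 = (l*u2 + c)^2" "ec_rhs a b u3 = (l*u3 + c)^2"
  using assms unfolding line_meets_def ec_rhs_def by algebra+

lemma line_meets_perm:
  assumes "line_meets a b l c u1 u2 u3"
  shows "line_meets a b l c u2 u1 u3" "line_meets a b l c u3 u2 u1"
  using assms unfolding line_meets_def by (auto simp: algebra_simps)

lemma line_meets_reflect:
  "line_meets a b l c u1 u2 u3 \<Longrightarrow> line_meets a b (-l) (-c) u1 u2 u3"
  unfolding line_meets_def by simp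

lemma line_meets_chord:
  assumes "y1^2 = ec_rhs a b x1" "y2^2 = ec_rhs a b x2" "x1 \<noteq> x2"
    and "l * (x2 - x1) = y2 - y1" "c = y1 - l * x1"
  shows "line_meets a b l c x1 x2 (l^2 - x1 - x2)"
proof -
  have "(x2 - x1) * (l * (y1 + y2)) = (x2 - x1) * (x1^2 + x1*x2 + x2^2 + a)"
    using assms unfolding ec_rhs_def by algebra
  then have "l * (y1 + y2) = x1^2 + x1*x2 + x2^2 + a"
    using assms(3) by simp
  then show ?thesis
    using assms unfolding line_meets_def ec_rhs_def by algebra
qed

lemma line_meets_tangent:
  assumes "y^2 = ec_rhs a b x" "l * (2*y) = 3*x^2 + a" "c = y - l * x"
  shows "line_meets a b l c x x (l^2 - 2*x)"
  using assms unfolding line_meets_def ec_rhs_def by algebra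

lemma line_meets_of_three:
  assumes "ec_rhs a b u1 = (l*u1 + c)^2" "ec_rhs a b u2 = (l*u2 + c)^2" "ec_rhs a b u3 = (l*u3 + c)^2"
    and "u1 \<noteq> u2" "u1 \<noteq> u3" "u2 \<noteq> u3"
  shows "line_meets a b l c u1 u2 u3"
proof -
  have "(u1 - u2) * (u1^2 + u1*u2 + u2^2 - l^2*(u1 + u2) + a - 2*l*c) = 0"
    using assms(1,2) unfolding ec_rhs_def by algebra
  then have 12: "u1^2 + u1*u2 + u2^2 - l^2*(u1 + u2) + a - 2*l*c = 0"
    using assms(4) by simp
  have "(u1 - u3) * (u1^2 + u1*u3 + u3^2 - l^2*(u1 + u3) + a - 2*l*c) = 0"
    using assms(1,3) unfolding ec_rhs_def by algebra
  then have 13: "u1^2 + u1*u3 + u3^2 - l^2*(u1 + u3) + a - 2*l*c = 0"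
    using assms(5) by simp
  have "(u2 - u3) * (u1 + u2 + u3 - l^2) = 0"
    using 12 13 by algebra
  then have "u1 + u2 + u3 = l^2"
    using assms(6) by simp
  then show ?thesis
    using 12 assms(1) unfolding line_meets_def ec_rhs_def by algebra
qed

lemma line_meets_of_tangent:
  assumes "ec_rhs a b u1 = (l*u1 + c)^2" "3*u1^2 + a = 2*l*(l*u1 + c)"
    and "ec_rhs a b u3 = (l*u3 + c)^2" "u1 \<noteq> u3"
  shows "line_meets a b l c u1 u1 u3"
proof -
  have "(u3 - u1) * (u3^2 + u1*u3 + u1^2 - l^2*(u3 + u1) + a - 2*l*c) = 0"
    using assms(1,3) unfolding ec_rhs_def by algebra
  then have "u3^2 + u1*u3 + u1^2 - l^2*(u3 + u1) + a - 2*l*c = 0"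
    using assms(4) by simp
  then have "(u3 - u1) * (u3 + 2*u1 - l^2) = 0"
    using assms(2) by algebra
  then have "u1 + u1 + u3 = l^2"
    using assms(4) by simp
  then show ?thesis
    using assms(1,2) unfolding line_meets_def ec_rhs_def by algebra
qed

lemma line_meets_cancel_common_root:
  assumes "line_meets a b l c u1 u2 d" "line_meets a b l c d u3 u4"
  shows "u3 = u1 \<or> u3 = u2"
proof -
  have "(u3 - u1) * (u3 - u2) = 0"
    using assms unfolding line_meets_def by algebra
  then show ?thesis by simp
qed

lemma on_curve_Some [simp]: "on_curve a b (Some (x, y)) \<longleftrightarrow> y^2 = ec_rhs a b x"
  unfolding on_curve_def ec_rhs_def by simp

lemma on_curve_None [simp]: "on_curve a b None"
  unfolding on_curve_def by simp

lemma ec_add_None_left [simp]: "ec_add a None Q = Q"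
  unfolding ec_add_def by simp

lemma ec_add_None_right [simp]: "ec_add a P None = P"
  unfolding ec_add_def by (simp split: option.split prod.split)

lemma ec_add_opposite: "ec_add a (Some (x, y)) (Some (x, - y)) = None"
  unfolding ec_add_def by simp

lemma ec_add_chord:
  "x1 \<noteq> x2 \<Longrightarrow> ec_add a (Some (x1, y1)) (Some (x2, y2)) =
    (let l = (y2 - y1) / (x2 - x1); x3 = l^2 - x1 - x2 in Some (x3, l * (x1 - x3) - y1))"
  unfolding ec_add_def by simp

lemma ec_add_tangent:
  "y \<noteq> 0 \<Longrightarrow> ec_add a (Some (x, y)) (Some (x, y)) =
    (let l = (3 * x^2 + a) / (2 * y); x3 = l^2 - 2 * x in Some (x3, l * (x - x3) - y))"
  unfolding ec_add_def by simp

lemma on_curve_same_x: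
  assumes "y1^2 = ec_rhs a b x" "y2^2 = ec_rhs a b x"
  shows "y2 = y1 \<or> y2 = - y1"
proof -
  have "y2^2 = y1^2"
    using assms by simp
  then show ?thesis
    by (simp add: power2_eq_iff)
qed

lemma ec_add_affine_line:
  assumes "y1^2 = ec_rhs a b x1" "y2^2 = ec_rhs a b x2" "\<not> (x1 = x2 \<and> y2 = - y1)"
  obtains l c where "y1 = l*x1 + c" "y2 = l*x2 + c" "line_meets a b l c x1 x2 (l^2 - x1 - x2)"
    "ec_add a (Some (x1, y1)) (Some (x2, y2)) = Some (l^2 - x1 - x2, - (l * (l^2 - x1 - x2) + c))"
proof (cases "x1 = x2")
  case False
  define l where "l = (y2 - y1) / (x2 - x1)"
  define c where "c = y1 - l * x1"
  have slope: "l * (x2 - x1) = y2 - y1"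
    using False unfolding l_def by simp
  show ?thesis
  proof
    show "y1 = l*x1 + c" "y2 = l*x2 + c"
      using slope unfolding c_def by (simp_all add: algebra_simps)
    show "line_meets a b l c x1 x2 (l^2 - x1 - x2)"
      using line_meets_chord[OF assms(1,2) False slope c_def] .
    show "ec_add a (Some (x1, y1)) (Some (x2, y2)) = Some (l^2 - x1 - x2, - (l * (l^2 - x1 - x2) + c))"
      unfolding ec_add_chord[OF False] Let_def l_def[symmetric] c_def by (simp add: algebra_simps)
  qed
next
  case True
  then have x2: "x2 = x1" ..
  with assms have y: "y2 = y1" "y1 \<noteq> 0"
    using on_curve_same_x[of y1 a b x1 y2] by auto
  define l where "l = (3 * x1^2 + a) / (2 * y1)"
  define c where "c = y1 - l * x1"
  have slope: "l * (2*y1) = 3*x1^2 + a"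
    using y unfolding l_def by simp
  show ?thesis
  proof
    show "y1 = l*x1 + c" "y2 = l*x2 + c"
      using x2 y unfolding c_def by simp_all
    show "line_meets a b l c x1 x2 (l^2 - x1 - x2)"
      using line_meets_tangent[OF assms(1) slope c_def] x2 by (simp add: algebra_simps)
    show "ec_add a (Some (x1, y1)) (Some (x2, y2)) = Some (l^2 - x1 - x2, - (l * (l^2 - x1 - x2) + c))"
      unfolding x2 y(1) ec_add_tangent[OF y(2)] Let_def l_def[symmetric] c_def
      by (simp add: algebra_simps)
  qed
qed

lemma ec_add_eq_None_iff:
  assumes "y1^2 = ec_rhs a b x1" "y2^2 = ec_rhs a b x2"
  shows "ec_add a (Some (x1, y1)) (Some (x2, y2)) = None \<longleftrightarrow> x1 = x2 \<and> y2 = - y1"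
  using ec_add_affine_line[OF assms] ec_add_opposite by (metis option.distinct(1))

lemma double_root_imp_singular:
  "ec_rhs a b u = 0 \<Longrightarrow> 3*u^2 + a = 0 \<Longrightarrow> 4*a^3 + 27*b^2 = 0"
  unfolding ec_rhs_def by algebra

lemma ec_add_line_meets:
  assumes ns: "4*a^3 + 27*b^2 \<noteq> 0" and L: "line_meets a b l c u1 u2 u3"
  shows "ec_add a (Some (u1, l*u1 + c)) (Some (u2, l*u2 + c)) = Some (u3, - (l*u3 + c))"
proof (cases "u1 = u2")
  case False
  have slope: "(l*u2 + c - (l*u1 + c)) / (u2 - u1) = l"
    using False by (simp add: field_simps)
  have u3: "u3 = l^2 - u1 - u2"
    using L unfolding line_meets_def by simp
  show ?thesis
    unfolding ec_add_chord[OF False] Let_def slope u3 by (simp add: algebra_simps)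
next
  case True
  have vieta: "u1 + u2 + u3 = l^2" "u1*u2 + u1*u3 + u2*u3 = a - 2*l*c"
    using L unfolding line_meets_def by auto
  have slope: "3*u1^2 + a = 2*l*(l*u1 + c)"
    using vieta True by algebra
  have y: "l*u1 + c \<noteq> 0"
  proof
    assume "l*u1 + c = 0"
    then have "ec_rhs a b u1 = 0" "3*u1^2 + a = 0"
      using line_meets_on_curve(1)[OF L] slope by auto
    then show False
      using double_root_imp_singular ns by blast
  qed
  have slope': "(3 * u1^2 + a) / (2 * (l*u1 + c)) = l"
    using slope y by (simp add: field_simps)
  have u3: "u3 = l^2 - 2*u1"
    using vieta True by simp
  show ?thesis
    unfolding True[symmetric] ec_add_tangent[OF y] Let_def slope' u3 by (simp add: algebra_simps)
qed

fun ec_neg :: "ec_point \<Rightarrow> ec_point" where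
  "ec_neg None = None"
| "ec_neg (Some (x, y)) = Some (x, - y)"

lemma ec_neg_neg [simp]: "ec_neg (ec_neg P) = P"
  by (cases P) auto

lemma on_curve_ec_neg: "on_curve a b P \<Longrightarrow> on_curve a b (ec_neg P)"
  by (cases P) auto

lemma ec_add_neg: "ec_add a P (ec_neg P) = None"
  by (cases P) (auto simp: ec_add_opposite)

lemma ec_add_cases:
  assumes "on_curve a b P" "on_curve a b Q"
  obtains (left_zero) "P = None"
    | (right_zero) "Q = None"
    | (opposite) x y where "P = Some (x, y)" "Q = Some (x, - y)"
    | (line) x1 x2 l c where "P = Some (x1, l*x1 + c)" "Q = Some (x2, l*x2 + c)"
        "line_meets a b l c x1 x2 (l^2 - x1 - x2)"
        "ec_add a P Q = Some (l^2 - x1 - x2, - (l * (l^2 - x1 - x2) + c))"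
proof (cases P)
  case (Some p)
  obtain x1 y1 where P: "P = Some (x1, y1)" using Some by (cases p) auto
  show ?thesis
  proof (cases Q)
    case (Some q)
    obtain x2 y2 where Q: "Q = Some (x2, y2)" using Some by (cases q) auto
    have "y1^2 = ec_rhs a b x1" "y2^2 = ec_rhs a b x2"
      using assms P Q by auto
    from ec_add_affine_line[OF this] show ?thesis
      using opposite line P Q by metis
  qed (rule right_zero)
qed (rule left_zero)

lemma ec_add_closed:
  assumes "on_curve a b P" "on_curve a b Q"
  shows "on_curve a b (ec_add a P Q)"
  using assms
proof (cases rule: ec_add_cases)
  case (line x1 x2 l c)
  show ?thesis
    unfolding line(4) on_curve_Some power2_minus using line_meets_on_curve(3)[OF line(3)] by simp
qed (use assms in \<open>auto simp: ec_add_opposite\<close>)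

lemma ec_add_comm:
  assumes ns: "4*a^3 + 27*b^2 \<noteq> 0" and "on_curve a b P" "on_curve a b Q"
  shows "ec_add a P Q = ec_add a Q P"
  using assms(2,3)
proof (cases rule: ec_add_cases)
  case (opposite x y)
  then show ?thesis
    using ec_add_opposite[of a x "- y"] ec_add_opposite[of a x y] by simp
next
  case (line x1 x2 l c)
  then show ?thesis
    using ec_add_line_meets[OF ns line_meets_perm(1)[OF line(3)]] by simp
qed simp_all

lemma ec_neg_add:
  assumes ns: "4*a^3 + 27*b^2 \<noteq> 0" and "on_curve a b P" "on_curve a b Q"
  shows "ec_neg (ec_add a P Q) = ec_add a (ec_neg P) (ec_neg Q)"
  using assms(2,3)
proof (cases rule: ec_add_cases)
  case (opposite x y)
  then show ?thesis
    using ec_add_opposite[of a x y] ec_add_opposite[of a x "- y"] by simp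
next
  case (line x1 x2 l c)
  then show ?thesis
    using ec_add_line_meets[OF ns line_meets_reflect[OF line(3)]] by simp
qed simp_all

lemma ec_add_neg_cancel:
  assumes ns: "4*a^3 + 27*b^2 \<noteq> 0" and "on_curve a b P" "on_curve a b Q"
  shows "ec_add a (ec_add a P Q) (ec_neg Q) = P"
  using assms(2,3)
proof (cases rule: ec_add_cases)
  case left_zero
  then show ?thesis by (simp add: ec_add_neg)
next
  case (opposite x y)
  then show ?thesis
    using ec_add_opposite[of a x y] by simp
next
  case (line x1 x2 l c)
  have "line_meets a b (-l) (-c) (l^2 - x1 - x2) x2 x1"
    using line_meets_reflect[OF line_meets_perm(2)[OF line(3)]] by simp
  from ec_add_line_meets[OF ns this] show ?thesis
    using line by simp
qed simp

section \<open>Associativity\<close>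

text \<open>The two lines pass through the opposite points \<open>(d, \<plusminus>y)\<close>; this makes the parabola
  \<open>(l1 + l2) y = x^2 + \<alpha> x + \<beta>\<close> meet the first line exactly at \<open>u1, u2\<close> and the second
  exactly at \<open>u3, u4\<close>.\<close>

lemma parabola_through_two_lines:
  assumes L1: "line_meets a b l1 c1 u1 u2 d" and L2: "line_meets a b l2 c2 d u3 u4"
    and opp: "l1*d + c1 = - (l2*d + c2)"
  obtains \<alpha> \<beta> where "\<alpha> - (l1 + l2)*l1 = - (u1 + u2)" "\<beta> - (l1 + l2)*c1 = u1*u2"
    "\<alpha> - (l1 + l2)*l2 = - (u3 + u4)" "\<beta> - (l1 + l2)*c2 = u3*u4"
proof
  show "(l1*l2 + d) - (l1 + l2)*l1 = - (u1 + u2)" "(l1*l2 + d) - (l1 + l2)*l2 = - (u3 + u4)"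
    using L1 L2 unfolding line_meets_def by algebra+
  show "(a + l1*c2 + l2*c1 + (l1*l2 + d)*d) - (l1 + l2)*c1 = u1*u2"
    "(a + l1*c2 + l2*c1 + (l1*l2 + d)*d) - (l1 + l2)*c2 = u3*u4"
    using L1 L2 opp unfolding line_meets_def by algebra+
qed

lemma parabola_through_sum:
  assumes A: "ya^2 = ec_rhs a b xa" and B: "yb^2 = ec_rhs a b xb" and C: "yc^2 = ec_rhs a b xc"
    and AB: "ec_add a (Some (xa, ya)) (Some (xb, yb)) = Some (xd, yd)"
    and DC: "ec_add a (Some (xd, yd)) (Some (xc, yc)) = Some (xs, ys)"
    and CA: "\<not> (xc = xa \<and> yc = - ya)" and CB: "\<not> (xc = xb \<and> yc = - yb)"
  obtains g \<alpha> \<beta> where "g \<noteq> 0"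
    "g*ya = xa^2 + \<alpha>*xa + \<beta>" "g*yb = xb^2 + \<alpha>*xb + \<beta>" "g*yc = xc^2 + \<alpha>*xc + \<beta>"
    "xs = g^2 - 2*\<alpha> - xa - xb - xc" "- g*ys = xs^2 + \<alpha>*xs + \<beta>"
    "xa = xb \<Longrightarrow> yb = ya \<Longrightarrow> (2*xa + \<alpha>) * (2*ya) = g * (3*xa^2 + a)"
    "xa = xc \<Longrightarrow> yc = ya \<Longrightarrow> (2*xa + \<alpha>) * (2*ya) = g * (3*xa^2 + a)"
proof -
  have "\<not> (xa = xb \<and> yb = - ya)"
    using AB ec_add_eq_None_iff[OF A B] ec_add_opposite by force
  then obtain l1 c1 where y1: "ya = l1*xa + c1" "yb = l1*xb + c1"
    and L1: "line_meets a b l1 c1 xa xb (l1^2 - xa - xb)"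
    and AB': "ec_add a (Some (xa, ya)) (Some (xb, yb)) = Some (l1^2 - xa - xb, - (l1*(l1^2 - xa - xb) + c1))"
    using ec_add_affine_line[OF A B] by blast
  have d: "xd = l1^2 - xa - xb" "yd = - (l1*xd + c1)"
    using AB AB' by auto
  have "yd^2 = (l1*xd + c1)^2"
    using d(2) by algebra
  then have D: "yd^2 = ec_rhs a b xd"
    using line_meets_on_curve(3)[OF L1] d(1) by simp
  have "\<not> (xd = xc \<and> yc = - yd)"
    using DC ec_add_eq_None_iff[OF D C] ec_add_opposite by force
  then obtain l2 c2 where y2: "yd = l2*xd + c2" "yc = l2*xc + c2"
    and L2: "line_meets a b l2 c2 xd xc (l2^2 - xd - xc)"
    and DC': "ec_add a (Some (xd, yd)) (Some (xc, yc)) = Some (l2^2 - xd - xc, - (l2*(l2^2 - xd - xc) + c2))"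
    using ec_add_affine_line[OF D C] by blast
  have s: "xs = l2^2 - xd - xc" "ys = - (l2*xs + c2)"
    using DC DC' by auto
  have L1': "line_meets a b l1 c1 xa xb xd" and L2': "line_meets a b l2 c2 xd xc xs"
    using L1 L2 d s by simp_all
  have opp: "l1*xd + c1 = - (l2*xd + c2)"
    using d y2 by simp
  obtain \<alpha> \<beta> where h: "\<alpha> - (l1 + l2)*l1 = - (xa + xb)" "\<beta> - (l1 + l2)*c1 = xa*xb"
    "\<alpha> - (l1 + l2)*l2 = - (xc + xs)" "\<beta> - (l1 + l2)*c2 = xc*xs"
    using parabola_through_two_lines[OF L1' L2' opp] by blast
  show thesis
  proof
    show "l1 + l2 \<noteq> 0"
    proof
      assume "l1 + l2 = 0"
      then have "l2 = - l1" "c2 = - c1"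
        using opp by algebra+
      then have "line_meets a b l1 c1 xd xc xs"
        using line_meets_reflect[OF L2'] by simp
      then have "xc = xa \<or> xc = xb"
        using line_meets_cancel_common_root[OF L1'] by blast
      then show False
        using CA CB y1 y2 \<open>l2 = - l1\<close> \<open>c2 = - c1\<close> by auto
    qed
    show "(l1 + l2)*ya = xa^2 + \<alpha>*xa + \<beta>" "(l1 + l2)*yb = xb^2 + \<alpha>*xb + \<beta>"
      using h(1,2) y1 by algebra+
    show "(l1 + l2)*yc = xc^2 + \<alpha>*xc + \<beta>" "- (l1 + l2)*ys = xs^2 + \<alpha>*xs + \<beta>"
      using h(3,4) y2 s by algebra+
    show "xs = (l1 + l2)^2 - 2*\<alpha> - xa - xb - xc"
      using h(1,3) by algebra
    show "(2*xa + \<alpha>) * (2*ya) = (l1 + l2) * (3*xa^2 + a)" if "xa = xb" "yb = ya"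
      using L1' that h(1) y1 unfolding line_meets_def by algebra
    show "(2*xa + \<alpha>) * (2*ya) = (l1 + l2) * (3*xa^2 + a)" if "xa = xc" "yc = ya"
      using L1' that h(1) y1 y2 opp unfolding line_meets_def by algebra
  qed
qed

lemma line_through_three_points:
  assumes ns: "4*a^3 + 27*b^2 \<noteq> 0"
    and A: "ya^2 = ec_rhs a b xa" and B: "yb^2 = ec_rhs a b xb" and C: "yc^2 = ec_rhs a b xc"
    and "xa \<noteq> xb" "xa \<noteq> xc" "xb \<noteq> xc"
    and on_line: "p*xa + u = r*ya" "p*xb + u = r*yb" "p*xc + u = r*yc"
    and sum: "ec_add a (Some (xa, ya)) (Some (xb, yb)) \<noteq> Some (xc, - yc)"
  shows "p = 0 \<and> u = 0 \<and> r = 0"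
proof (cases "r = 0")
  case True
  then have "p * (xa - xb) = 0"
    using on_line(1,2) by algebra
  then show ?thesis
    using True on_line(1) \<open>xa \<noteq> xb\<close> by simp
next
  case False
  define l c where "l = p / r" and "c = u / r"
  have y: "ya = l*xa + c" "yb = l*xb + c" "yc = l*xc + c"
    using on_line False unfolding l_def c_def by (simp_all add: field_simps)
  have "line_meets a b l c xa xb xc"
    using line_meets_of_three[of a b xa l c xb xc] A B C y assms(5-7) by simp
  from ec_add_line_meets[OF ns this] show ?thesis
    using sum y by simp
qed

lemma line_tangent_through_two_points:
  assumes ns: "4*a^3 + 27*b^2 \<noteq> 0"
    and A: "ya^2 = ec_rhs a b xa" and C: "yc^2 = ec_rhs a b xc" and "xa \<noteq> xc" "ya \<noteq> 0"
    and on_line: "p*xa + u = r*ya" "p*xc + u = r*yc"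
    and tangent: "p * (2*ya) = r * (3*xa^2 + a)"
    and sum: "ec_add a (Some (xa, ya)) (Some (xa, ya)) \<noteq> Some (xc, - yc)"
  shows "p = 0 \<and> u = 0 \<and> r = 0"
proof (cases "r = 0")
  case True
  then show ?thesis
    using tangent on_line(1) \<open>ya \<noteq> 0\<close> by simp
next
  case False
  define l c where "l = p / r" and "c = u / r"
  have y: "ya = l*xa + c" "yc = l*xc + c"
    using on_line False unfolding l_def c_def by (simp_all add: field_simps)
  have "3*xa^2 + a = 2*l*(l*xa + c)"
    using tangent False y(1) unfolding l_def by (simp add: field_simps)
  then have "line_meets a b l c xa xa xc"
    using line_meets_of_tangent[of a b xa l c xc] A C y \<open>xa \<noteq> xc\<close> by simp
  from ec_add_line_meets[OF ns this] show ?thesis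
    using sum y by simp
qed

text \<open>Both \<open>(A + B) + C\<close> and \<open>A + (B + C)\<close> are read off from a parabola through
  \<open>A, B, C\<close>; the difference of the two parabolas is a line through \<open>A, B, C\<close>, which must
  be trivial.\<close>

lemma ec_add_assoc_affine:
  assumes ns: "4*a^3 + 27*b^2 \<noteq> 0"
    and A: "ya^2 = ec_rhs a b xa" and B: "yb^2 = ec_rhs a b xb" and C: "yc^2 = ec_rhs a b xc"
    and AB: "ec_add a (Some (xa, ya)) (Some (xb, yb)) = Some (xd, yd)"
    and BC: "ec_add a (Some (xb, yb)) (Some (xc, yc)) = Some (xe, ye)"
    and DC: "ec_add a (Some (xd, yd)) (Some (xc, yc)) = Some (xs, ys)"
    and AE: "ec_add a (Some (xa, ya)) (Some (xe, ye)) = Some (xs', ys')"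
    and "xa \<noteq> xc" and cases: "xa \<noteq> xb \<and> xb \<noteq> xc \<or> xa = xb \<and> ya = yb"
  shows "xs = xs' \<and> ys = ys'"
proof -
  have nAB: "\<not> (xa = xb \<and> ya = - yb)"
    using AB ec_add_opposite[of a xa ya] by auto
  have nBC: "\<not> (xc = xb \<and> yc = - yb)"
    using BC ec_add_opposite[of a xb yb] by auto
  have E: "ye^2 = ec_rhs a b xe"
    using ec_add_closed[of a b "Some (xb, yb)" "Some (xc, yc)"] B C BC by simp
  have EA: "ec_add a (Some (xe, ye)) (Some (xa, ya)) = Some (xs', ys')"
    using AE ec_add_comm[OF ns, of "Some (xa, ya)" "Some (xe, ye)"] A E by simp
  obtain g \<alpha> \<beta> where "g \<noteq> 0"
    and P: "g*ya = xa^2 + \<alpha>*xa + \<beta>" "g*yb = xb^2 + \<alpha>*xb + \<beta>" "g*yc = xc^2 + \<alpha>*xc + \<beta>"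
    and S: "xs = g^2 - 2*\<alpha> - xa - xb - xc" "- g*ys = xs^2 + \<alpha>*xs + \<beta>"
    and tan: "xa = xb \<Longrightarrow> yb = ya \<Longrightarrow> (2*xa + \<alpha>) * (2*ya) = g * (3*xa^2 + a)"
    using parabola_through_sum[OF A B C AB DC] \<open>xa \<noteq> xc\<close> nBC by metis
  obtain g' \<alpha>' \<beta>'
    where P': "g'*yb = xb^2 + \<alpha>'*xb + \<beta>'" "g'*yc = xc^2 + \<alpha>'*xc + \<beta>'"
      "g'*ya = xa^2 + \<alpha>'*xa + \<beta>'"
    and S': "xs' = g'^2 - 2*\<alpha>' - xb - xc - xa" "- g'*ys' = xs'^2 + \<alpha>'*xs' + \<beta>'"
    and tan': "xb = xa \<Longrightarrow> ya = yb \<Longrightarrow> (2*xb + \<alpha>') * (2*yb) = g' * (3*xb^2 + a)"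
    using parabola_through_sum[OF B C A BC EA] \<open>xa \<noteq> xc\<close> nAB by metis
  have on_line: "(\<alpha> - \<alpha>')*xa + (\<beta> - \<beta>') = (g - g')*ya"
    "(\<alpha> - \<alpha>')*xb + (\<beta> - \<beta>') = (g - g')*yb" "(\<alpha> - \<alpha>')*xc + (\<beta> - \<beta>') = (g - g')*yc"
    using P P' by algebra+
  have not_sum: "ec_add a (Some (xa, ya)) (Some (xb, yb)) \<noteq> Some (xc, - yc)"
    using AB DC ec_add_opposite[of a xc "- yc"] by auto
  have "\<alpha> - \<alpha>' = 0 \<and> \<beta> - \<beta>' = 0 \<and> g - g' = 0"
    using cases
  proof
    assume "xa \<noteq> xb \<and> xb \<noteq> xc"
    then show ?thesis
      using line_through_three_points[OF ns A B C _ \<open>xa \<noteq> xc\<close> _ on_line not_sum] by blast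
  next
    assume AB_eq: "xa = xb \<and> ya = yb"
    then have "(2*xa + \<alpha>) * (2*ya) = g * (3*xa^2 + a)" "(2*xa + \<alpha>') * (2*ya) = g' * (3*xa^2 + a)"
      using tan tan' by auto
    then have "(\<alpha> - \<alpha>') * (2*ya) = (g - g') * (3*xa^2 + a)"
      by algebra
    moreover have "ya \<noteq> 0"
      using nAB AB_eq by auto
    ultimately show ?thesis
      using line_tangent_through_two_points[OF ns A C \<open>xa \<noteq> xc\<close> _ on_line(1,3)] not_sum AB_eq
      by simp
  qed
  then have eq: "\<alpha> = \<alpha>'" "\<beta> = \<beta>'" "g = g'"
    by simp_all
  then have xs: "xs = xs'"
    using S(1) S'(1) by simp
  have "g*ys = g*ys'"
    using S(2) S'(2) unfolding eq xs by (metis minus_mult_left neg_equal_iff_equal)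
  then show ?thesis
    using xs \<open>g \<noteq> 0\<close> by simp
qed

lemma ec_add_assoc_nondegenerate:
  assumes ns: "4*a^3 + 27*b^2 \<noteq> 0"
    and "on_curve a b A" "on_curve a b B" "on_curve a b C"
    and "A \<noteq> None" "B \<noteq> None" "C \<noteq> None"
    and "B \<noteq> ec_neg A" "C \<noteq> ec_neg B" "C \<noteq> ec_neg A" "C \<noteq> A"
    and "ec_add a A B \<noteq> ec_neg C" "ec_add a B C \<noteq> ec_neg A" and "B \<noteq> C \<or> A = B"
  shows "ec_add a (ec_add a A B) C = ec_add a A (ec_add a B C)"
proof -
  obtain xa ya xb yb xc yc where A: "A = Some (xa, ya)" and B: "B = Some (xb, yb)"
    and C: "C = Some (xc, yc)"
    using assms(5-7) by fastforce
  have cA: "ya^2 = ec_rhs a b xa" and cB: "yb^2 = ec_rhs a b xb" and cC: "yc^2 = ec_rhs a b xc"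
    using assms(2-4) A B C by simp_all
  obtain xd yd where D: "ec_add a A B = Some (xd, yd)"
    using ec_add_eq_None_iff[OF cA cB] assms(8) A B by fastforce
  obtain xe ye where E: "ec_add a B C = Some (xe, ye)"
    using ec_add_eq_None_iff[OF cB cC] assms(9) B C by fastforce
  have cD: "yd^2 = ec_rhs a b xd" and cE: "ye^2 = ec_rhs a b xe"
    using ec_add_closed[OF assms(2,3)] ec_add_closed[OF assms(3,4)] D E by simp_all
  obtain xs ys where S: "ec_add a (Some (xd, yd)) C = Some (xs, ys)"
    using ec_add_eq_None_iff[OF cD cC] assms(12) C D by fastforce
  obtain xs' ys' where S': "ec_add a A (Some (xe, ye)) = Some (xs', ys')"
    using ec_add_eq_None_iff[OF cA cE] assms(13) A E by fastforce
  have "xa \<noteq> xc"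
    using on_curve_same_x[OF cA, of yc] cC assms(10,11) A C by auto
  moreover have "xa \<noteq> xb \<and> xb \<noteq> xc \<or> xa = xb \<and> ya = yb"
    using on_curve_same_x[OF cA, of yb] on_curve_same_x[OF cB, of yc] cB cC assms(8,9,14) A B C
    by fastforce
  ultimately show ?thesis
    using ec_add_assoc_affine[OF ns cA cB cC, of xd yd xe ye xs ys xs' ys'] A B C D E S S' by simp
qed

lemma ec_add_neg_cancel_left:
  assumes ns: "4*a^3 + 27*b^2 \<noteq> 0" and P: "on_curve a b P" and Q: "on_curve a b Q"
  shows "ec_add a P (ec_add a (ec_neg P) Q) = Q"
proof -
  have nP: "on_curve a b (ec_neg P)"
    using on_curve_ec_neg[OF P] .
  have "ec_add a P (ec_add a (ec_neg P) Q) = ec_add a (ec_add a Q (ec_neg P)) (ec_neg (ec_neg P))"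
    using ec_add_comm[OF ns P ec_add_closed[OF nP Q]] ec_add_comm[OF ns nP Q] by simp
  also have "\<dots> = Q"
    using ec_add_neg_cancel[OF ns Q nP] .
  finally show ?thesis .
qed

lemma ec_add_assoc_degenerate:
  assumes ns: "4*a^3 + 27*b^2 \<noteq> 0"
    and A: "on_curve a b A" and B: "on_curve a b B" and C: "on_curve a b C"
    and degenerate: "A = None \<or> B = None \<or> C = None \<or> B = ec_neg A \<or> C = ec_neg B \<or> C = ec_neg A
      \<or> C = A \<or> ec_add a A B = ec_neg C \<or> ec_add a B C = ec_neg A"
  shows "ec_add a (ec_add a A B) C = ec_add a A (ec_add a B C)"
proof -
  note comm = ec_add_comm[OF ns] and cancel = ec_add_neg_cancel[OF ns]
    and cancel_left = ec_add_neg_cancel_left[OF ns]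
  have negs: "ec_add a (ec_neg C) C = None"
    using comm[OF on_curve_ec_neg[OF C] C] by (simp add: ec_add_neg)
  from degenerate consider "A = None \<or> B = None \<or> C = None" | "B = ec_neg A" | "C = ec_neg B"
    | "C = ec_neg A" | "C = A" | "ec_add a A B = ec_neg C" | "ec_add a B C = ec_neg A"
    by blast
  then show ?thesis
  proof cases
    case 1
    then show ?thesis by auto
  next
    case 2
    then show ?thesis
      using cancel_left[OF A C] by (simp add: ec_add_neg)
  next
    case 3
    then show ?thesis
      using cancel[OF A B] by (simp add: ec_add_neg)
  next
    case 4
    then show ?thesis
      using cancel[OF B A] cancel_left[OF A B] comm[OF A B] comm[OF B on_curve_ec_neg[OF A]] by simp
  next
    case 5
    then show ?thesis
      using comm[OF ec_add_closed[OF A B] A] comm[OF A B] by simp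
  next
    case 6
    have "ec_neg (ec_add a B C) = ec_add a (ec_neg B) (ec_add a A B)"
      using ec_neg_add[OF ns B C] 6 by simp
    also have "\<dots> = A"
      using cancel_left[OF on_curve_ec_neg[OF B] A] comm[OF A B] by simp
    finally have "ec_add a B C = ec_neg A"
      by (metis ec_neg_neg)
    then show ?thesis
      using 6 negs by (simp add: ec_add_neg)
  next
    case 7
    have "ec_neg (ec_add a A B) = ec_add a (ec_add a B C) (ec_neg B)"
      using ec_neg_add[OF ns A B] 7 by simp
    also have "\<dots> = C"
      using cancel[OF C B] comm[OF B C] by simp
    finally have "ec_add a A B = ec_neg C"
      by (metis ec_neg_neg)
    then show ?thesis
      using 7 negs by (simp add: ec_add_neg)
  qed
qed

lemma ec_add_assoc:
  assumes ns: "4*a^3 + 27*b^2 \<noteq> 0"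
    and A: "on_curve a b A" and B: "on_curve a b B" and C: "on_curve a b C"
  shows "ec_add a (ec_add a A B) C = ec_add a A (ec_add a B C)"
proof (cases "A = None \<or> B = None \<or> C = None \<or> B = ec_neg A \<or> C = ec_neg B \<or> C = ec_neg A
      \<or> C = A \<or> ec_add a A B = ec_neg C \<or> ec_add a B C = ec_neg A")
  case True
  then show ?thesis
    using ec_add_assoc_degenerate[OF ns A B C] by blast
next
  case False
  note comm = ec_add_comm[OF ns]
  show ?thesis
  proof (cases "B \<noteq> C \<or> A = B")
    case True
    with False show ?thesis
      by (intro ec_add_assoc_nondegenerate[OF ns A B C]) auto
  next
    case BC: False
    \<comment> \<open>\<open>B = C \<noteq> A\<close>: reversing the order puts the repeated point first.\<close>
    have "ec_add a (ec_add a C B) A = ec_add a C (ec_add a B A)"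
      using ec_add_assoc_nondegenerate[OF ns C B A] False BC comm[OF A B] comm[OF B C]
      by (metis ec_neg_neg)
    then show ?thesis
      using comm[OF ec_add_closed[OF A B] C] comm[OF A ec_add_closed[OF B C]] comm[OF A B] comm[OF B C]
      by simp
  qed
qed

section \<open>Multiples and doubling\<close>

lemma ec_mult_closed: "on_curve a b P \<Longrightarrow> on_curve a b (ec_mult a n P)"
  by (induction n) (auto intro: ec_add_closed)

lemma ec_mult_add:
  assumes ns: "4*a^3 + 27*b^2 \<noteq> 0" and P: "on_curve a b P"
  shows "ec_mult a (m + n) P = ec_add a (ec_mult a m P) (ec_mult a n P)"
proof (induction m)
  case (Suc m)
  then show ?case
    using ec_add_assoc[OF ns P ec_mult_closed[OF P] ec_mult_closed[OF P]] by simp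
qed simp

lemma ec_mult_mod:
  assumes ns: "4*a^3 + 27*b^2 \<noteq> 0" and P: "on_curve a b P" and n: "ec_mult a n P = None"
  shows "ec_mult a k P = ec_mult a (k mod n) P"
proof -
  have "ec_mult a (n * q) P = None" for q
    by (induction q) (simp_all add: ec_mult_add[OF ns P] n)
  then show ?thesis
    using ec_mult_add[OF ns P, of "n * (k div n)" "k mod n"] by simp
qed

definition ec_double :: "rat \<Rightarrow> ec_point \<Rightarrow> ec_point" where
  "ec_double a P = ec_add a P P"

lemma ec_double_iterate:
  assumes ns: "4*a^3 + 27*b^2 \<noteq> 0" and P: "on_curve a b P"
  shows "(ec_double a ^^ j) P = ec_mult a (2^j) P"
  by (induction j) (simp_all add: ec_double_def ec_mult_add[OF ns P, symmetric] mult_2)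

lemma finite_doubling_orbit:
  assumes ns: "4*a^3 + 27*b^2 \<noteq> 0" and P: "on_curve a b P"
    and "n > 0" and n: "ec_mult a n P = None"
  shows "finite (range (\<lambda>j. (ec_double a ^^ j) P))"
proof (rule finite_subset)
  show "range (\<lambda>j. (ec_double a ^^ j) P) \<subseteq> (\<lambda>k. ec_mult a k P) ` {..<n}"
  proof clarify
    fix j
    have "(ec_double a ^^ j) P = ec_mult a (2^j mod n) P"
      using ec_mult_mod[OF ns P n] ec_double_iterate[OF ns P] by simp
    then show "(ec_double a ^^ j) P \<in> (\<lambda>k. ec_mult a k P) ` {..<n}"
      using \<open>n > 0\<close> by auto
  qed
qed simp

section \<open>2-adic integrality\<close>

definition two_integral :: "rat \<Rightarrow> bool" where
  "two_integral q \<longleftrightarrow> (\<exists>m n. odd n \<and> q = of_int m / of_int n)"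

definition two_unit :: "rat \<Rightarrow> bool" where
  "two_unit q \<longleftrightarrow> (\<exists>m n. odd m \<and> odd n \<and> q = of_int m / of_int n)"

definition two_pole :: "nat \<Rightarrow> rat \<Rightarrow> bool" where
  "two_pole k w \<longleftrightarrow> k \<ge> 1 \<and> (\<exists>u. two_unit u \<and> w = u / 2^k)"

lemma odd_of_int_nonzero: "odd n \<Longrightarrow> (of_int n :: rat) \<noteq> 0"
  by (auto elim: oddE)

lemma two_integral_of_int [simp]: "two_integral (of_int m)"
  unfolding two_integral_def by (rule exI[of _ m], rule exI[of _ 1]) simp

lemma two_integral_numeral [simp]: "two_integral 0" "two_integral 1" "two_integral (numeral k)"
  using two_integral_of_int[of 0] two_integral_of_int[of 1] two_integral_of_int[of "numeral k"]
  by simp_all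

lemma two_integral_add [intro]:
  assumes "two_integral p" "two_integral q"
  shows "two_integral (p + q)"
proof -
  obtain m1 n1 m2 n2 where n: "odd n1" "odd n2"
    and pq: "p = of_int m1 / of_int n1" "q = of_int m2 / of_int n2"
    using assms unfolding two_integral_def by blast
  then have "p + q = of_int (m1*n2 + m2*n1) / of_int (n1*n2)" "odd (n1*n2)"
    using odd_of_int_nonzero[OF n(1)] odd_of_int_nonzero[OF n(2)] by (simp_all add: field_simps)
  then show ?thesis
    unfolding two_integral_def by blast
qed

lemma two_integral_mult [intro]:
  assumes "two_integral p" "two_integral q"
  shows "two_integral (p * q)"
proof -
  obtain m1 n1 m2 n2 where "odd n1" "p = of_int m1 / of_int n1" "odd n2" "q = of_int m2 / of_int n2"
    using assms unfolding two_integral_def by blast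
  then have "p * q = of_int (m1*m2) / of_int (n1*n2)" "odd (n1*n2)"
    by simp_all
  then show ?thesis
    unfolding two_integral_def by blast
qed

lemma two_integral_minus [intro]: "two_integral p \<Longrightarrow> two_integral (- p)"
  unfolding two_integral_def by (metis minus_divide_left of_int_minus)

lemma two_integral_diff [intro]: "two_integral p \<Longrightarrow> two_integral q \<Longrightarrow> two_integral (p - q)"
  using two_integral_add[of p "- q"] by auto

lemma two_integral_power [intro]: "two_integral p \<Longrightarrow> two_integral (p ^ n)"
  by (induction n) auto

lemma two_integral_power_two [simp]: "two_integral (2 ^ n)"
  by auto

lemma two_unit_imp_integral: "two_unit q \<Longrightarrow> two_integral q"
  unfolding two_unit_def two_integral_def by blast

lemma two_unit_of_odd: "odd m \<Longrightarrow> two_unit (of_int m)"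
  unfolding two_unit_def by (rule exI[of _ m], rule exI[of _ 1]) simp

lemma two_unit_mult [intro]:
  assumes "two_unit p" "two_unit q"
  shows "two_unit (p * q)"
proof -
  obtain m1 n1 m2 n2 where "odd m1" "odd n1" "p = of_int m1 / of_int n1"
    "odd m2" "odd n2" "q = of_int m2 / of_int n2"
    using assms unfolding two_unit_def by blast
  then have "p * q = of_int (m1*m2) / of_int (n1*n2)" "odd (m1*m2)" "odd (n1*n2)"
    by simp_all
  then show ?thesis
    unfolding two_unit_def by blast
qed

lemma two_unit_divide [intro]:
  assumes "two_unit p" "two_unit q"
  shows "two_unit (p / q)"
proof -
  obtain m1 n1 m2 n2 where "odd m1" "odd n1" "p = of_int m1 / of_int n1"
    "odd m2" "odd n2" "q = of_int m2 / of_int n2"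
    using assms unfolding two_unit_def by blast
  then have "p / q = of_int (m1*n2) / of_int (n1*m2)" "odd (m1*n2)" "odd (n1*m2)"
    by (simp_all add: odd_of_int_nonzero)
  then show ?thesis
    unfolding two_unit_def by blast
qed

lemma two_unit_minus [intro]:
  assumes "two_unit p"
  shows "two_unit (- p)"
proof -
  obtain m n where "odd m" "odd n" "p = of_int m / of_int n"
    using assms unfolding two_unit_def by blast
  then have "- p = of_int (- m) / of_int n" "odd (- m)"
    by simp_all
  then show ?thesis
    using \<open>odd n\<close> unfolding two_unit_def by blast
qed

lemma two_unit_power [intro]: "two_unit p \<Longrightarrow> two_unit (p ^ n)"
  by (induction n) (auto simp: two_unit_of_odd[of 1, simplified])

lemma two_integral_divide_unit [intro]: "two_integral p \<Longrightarrow> two_unit q \<Longrightarrow> two_integral (p / q)"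
  using two_integral_mult[of p "1 / q"] two_unit_divide[of 1 q] two_unit_of_odd[of 1]
  by (simp add: two_unit_imp_integral)

lemma two_unit_iff: "two_unit u \<longleftrightarrow> (\<exists>z. two_integral z \<and> u = 1 + 2*z)"
proof
  assume "two_unit u"
  then obtain m n where "odd m" "odd n" and u: "u = of_int m / of_int n"
    unfolding two_unit_def by blast
  then obtain k where "m = n + 2*k"
    by (metis add.commute diff_add_cancel evenE odd_add)
  then have "(of_int m :: rat) = of_int n + 2 * of_int k"
    by simp
  then have "u = 1 + 2 * (of_int k / of_int n)"
    using u odd_of_int_nonzero[OF \<open>odd n\<close>] by (simp add: field_simps)
  then show "\<exists>z. two_integral z \<and> u = 1 + 2*z"
    using \<open>odd n\<close> unfolding two_integral_def by blast
next
  assume "\<exists>z. two_integral z \<and> u = 1 + 2*z"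
  then obtain m n where "odd n" "u = 1 + 2 * (of_int m / of_int n)"
    unfolding two_integral_def by blast
  then have "u = of_int (n + 2*m) / of_int n" "odd (n + 2*m)"
    using odd_of_int_nonzero[OF \<open>odd n\<close>] by (simp_all add: field_simps)
  then show "two_unit u"
    using \<open>odd n\<close> unfolding two_unit_def by blast
qed

lemma two_unit_add_even [intro]: "two_unit u \<Longrightarrow> two_integral z \<Longrightarrow> two_unit (u + 2*z)"
  unfolding two_unit_iff by (metis add.assoc distrib_left two_integral_add)

lemma two_unit_not_even:
  assumes "two_unit u" "two_integral z"
  shows "u \<noteq> 2 * z"
proof
  assume e: "u = 2 * z"
  obtain m n m' n' where "odd m" "odd n" "odd n'"
    and uz: "u = of_int m / of_int n" "z = of_int m' / of_int n'"
    using assms unfolding two_unit_def two_integral_def by blast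
  with e have "(of_int (m * n') :: rat) = of_int (2 * m' * n)"
    using odd_of_int_nonzero[OF \<open>odd n\<close>] odd_of_int_nonzero[OF \<open>odd n'\<close>]
    by (simp add: field_simps)
  then have "m * n' = 2 * m' * n"
    by (simp only: of_int_eq_iff)
  then show False
    using \<open>odd m\<close> \<open>odd n'\<close> by (metis dvd_triv_left even_mult_iff mult.assoc)
qed

lemma two_integral_cases:
  assumes "two_integral q"
  shows "two_unit q \<or> (\<exists>z. two_integral z \<and> q = 2 * z)"
proof -
  obtain m n where "odd n" and q: "q = of_int m / of_int n"
    using assms unfolding two_integral_def by blast
  show ?thesis
  proof (cases "odd m")
    case True
    then show ?thesis
      using \<open>odd n\<close> q unfolding two_unit_def by blast
  next
    case False
    then obtain k where "m = 2 * k"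
      by (auto elim: evenE)
    then have "q = 2 * (of_int k / of_int n)"
      using q by simp
    then show ?thesis
      using \<open>odd n\<close> unfolding two_integral_def by blast
  qed
qed

lemma int_two_power_decompose:
  assumes "(m::int) \<noteq> 0"
  obtains j m' where "odd m'" "m = 2^j * m'"
proof -
  have "\<not> is_unit (2::int)"
    by simp
  from multiplicity_decompose'[OF assms this] show ?thesis
    using that by blast
qed

lemma two_integral_decompose:
  assumes "two_integral z" "z \<noteq> 0"
  obtains j u where "two_unit u" "z = 2^j * u"
proof -
  obtain m n where "odd n" and z: "z = of_int m / of_int n"
    using assms unfolding two_integral_def by blast
  moreover have "m \<noteq> 0"
    using z assms(2) by auto
  ultimately obtain j m' where "odd m'" "m = 2^j * m'"
    using int_two_power_decompose by metis
  then have "z = 2^j * (of_int m' / of_int n)" "two_unit (of_int m' / of_int n)"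
    using z \<open>odd n\<close> unfolding two_unit_def by auto
  then show ?thesis
    using that by blast
qed

lemma rat_two_adic_cases:
  assumes "(q::rat) \<noteq> 0"
  shows "two_integral q \<or> (\<exists>k. two_pole k q)"
proof -
  obtain m n where mn: "quotient_of q = (m, n)"
    by (cases "quotient_of q")
  then have q: "q = of_int m / of_int n" and "n \<noteq> 0"
    using quotient_of_div quotient_of_denom_pos by fastforce+
  then obtain j n' where "odd n'" and n: "n = 2^j * n'"
    using int_two_power_decompose by metis
  have "two_integral (of_int m / of_int n')" "of_int m / of_int n' \<noteq> (0::rat)"
    using \<open>odd n'\<close> assms q n unfolding two_integral_def by auto
  then obtain i u where "two_unit u" and mu: "of_int m / of_int n' = 2^i * u"
    using two_integral_decompose by blast
  have q': "q = 2^i * u / 2^j"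
    using q n mu by (simp add: field_simps)
  show ?thesis
  proof (cases "i \<ge> j")
    case True
    then have "q = 2^(i - j) * u"
      using q' by (simp add: power_diff)
    then show ?thesis
      using two_unit_imp_integral[OF \<open>two_unit u\<close>] by auto
  next
    case False
    then have "q = u / 2^(j - i)" "j - i \<ge> 1"
      using q' by (simp_all add: power_diff field_simps)
    then show ?thesis
      using \<open>two_unit u\<close> unfolding two_pole_def by blast
  qed
qed

lemma two_pole_unique:
  assumes "two_pole k w" "two_pole k' w"
  shows "k = k'"
proof -
  have False if units: "two_unit u" "two_unit u'" and eq: "u / 2^k = u' / 2^k'" and "k < k'"
    for u u' :: rat and k k'
  proof -
    obtain d where "k' = Suc (k + d)"
      using less_imp_Suc_add[OF \<open>k < k'\<close>] by blast
    then have "u' = 2 * (u * 2^d)"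
      using eq by (simp add: field_simps power_add)
    moreover have "two_integral (u * 2^d)"
      using two_unit_imp_integral[OF units(1)] by auto
    ultimately show False
      using two_unit_not_even[OF units(2)] by blast
  qed
  moreover obtain u u' where "two_unit u" "w = u / 2^k" "two_unit u'" "w = u' / 2^k'"
    using assms unfolding two_pole_def by blast
  ultimately show ?thesis
    by (metis linorder_neqE_nat)
qed

lemma two_pole_divide:
  assumes "j \<ge> 1" "two_unit u" "two_integral v" "v \<noteq> 0"
  shows "\<exists>k\<ge>j. two_pole k (u / (2^j * v))"
proof -
  obtain i u' where u': "two_unit u'" "v = 2^i * u'"
    using two_integral_decompose[OF assms(3,4)] by blast
  then have "u / (2^j * v) = (u / u') / 2^(j + i)"
    by (simp add: power_add field_simps)
  then have "two_pole (j + i) (u / (2^j * v))"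
    unfolding two_pole_def using assms(1,2) u'(1) by auto
  then show ?thesis
    by (intro exI[of _ "j + i"]) simp
qed

section \<open>The duplication map\<close>

text \<open>In the coordinate \<open>w = (x + D) / (4 D)\<close> on \<open>y^2 = x^3 - 35 D^2 x - 98 D^3\<close>, doubling
  sends \<open>w\<close> to \<open>dup_num w / dup_den w\<close> (lemma \<open>twist_double_dup_map\<close>).\<close>

definition dup_num :: "rat \<Rightarrow> rat" where
  "dup_num w = w^4 + 4*w^2 + 8*w + 1"

definition dup_den :: "rat \<Rightarrow> rat" where
  "dup_den w = 4*w^3 - 3*w^2 - 8*w - 4"

definition dup_map :: "rat \<Rightarrow> rat" where
  "dup_map w = dup_num w / dup_den w"

lemma two_poleE:
  assumes "two_pole k w"
  obtains u t' where "two_unit u" "w = u / (2 * t')" "2 * t' = 2^k" "two_integral t'"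
proof -
  obtain u where "two_unit u" "w = u / 2^k" and "k \<ge> 1"
    using assms unfolding two_pole_def by blast
  moreover have "2 * 2^(k - 1) = (2::rat)^k" "two_integral (2^(k - 1))"
    using \<open>k \<ge> 1\<close> by (simp_all flip: power_Suc)
  ultimately show ?thesis
    using that by metis
qed

lemma dup_num_two_pole:
  assumes "two_pole k w"
  obtains n where "two_unit n" "dup_num w = n / (2^k)^4"
proof -
  obtain u t' where u: "two_unit u" "w = u / (2 * t')" and t: "2 * t' = 2^k" "two_integral t'"
    using two_poleE[OF assms] .
  define n where "n = u^4 + 2 * (8 * u^2 * t'^2 + 32 * u * t'^3 + 8 * t'^4)"
  have "t' \<noteq> 0"
    using t(1) by (metis mult_zero_right power_not_zero zero_neq_numeral)
  then have "dup_num w = n / (2 * t')^4"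
    unfolding dup_num_def n_def u(2) by (simp add: field_simps) algebra
  moreover have "two_unit n"
    unfolding n_def using u(1) t(2) by (intro two_unit_add_even two_unit_power two_integral_add
      two_integral_mult two_integral_power) (auto intro: two_unit_imp_integral)
  ultimately show ?thesis
    using that t(1) by metis
qed

lemma dup_den_two_pole:
  assumes "two_pole k w"
  shows "two_integral ((2^k)^3 * dup_den w / 2)"
proof -
  obtain u t' where u: "two_unit u" "w = u / (2 * t')" and t: "2 * t' = 2^k" "two_integral t'"
    using two_poleE[OF assms] .
  have "t' \<noteq> 0"
    using t(1) by (metis mult_zero_right power_not_zero zero_neq_numeral)
  then have "(2 * t')^3 * dup_den w / 2 = 2 * u^3 - 3 * u^2 * t' - 16 * u * t'^2 - 16 * t'^3"
    unfolding dup_den_def u(2) by (simp add: field_simps) algebra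
  moreover have "two_integral (2 * u^3 - 3 * u^2 * t' - 16 * u * t'^2 - 16 * t'^3)"
    using two_unit_imp_integral[OF u(1)] t(2)
    by (intro two_integral_diff two_integral_mult two_integral_power) simp_all
  ultimately show ?thesis
    using t(1) by metis
qed

lemma dup_map_two_pole:
  assumes "two_pole k w" "dup_den w \<noteq> 0"
  shows "\<exists>k'>k. two_pole k' (dup_map w)"
proof -
  obtain n where "two_unit n" and num: "dup_num w = n / (2^k)^4"
    using dup_num_two_pole[OF assms(1)] .
  define v where "v = (2^k)^3 * dup_den w / 2"
  have "two_integral v" "v \<noteq> 0"
    unfolding v_def using dup_den_two_pole[OF assms(1)] assms(2) by simp_all
  moreover have "dup_map w = n / (2^(k + 1) * v)"
    unfolding dup_map_def num v_def using assms(2) by (simp add: field_simps power_add eval_nat_numeral)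
  ultimately obtain k' where "k' \<ge> k + 1" "two_pole k' (dup_map w)"
    using two_pole_divide[of "k + 1" n v] \<open>two_unit n\<close> by auto
  then show ?thesis
    by (intro exI[of _ k']) simp
qed

lemma dup_map_even:
  assumes "two_integral z" "dup_den (2 * z) \<noteq> 0"
  shows "\<exists>k. two_pole k (dup_map (2 * z))"
proof -
  define n where "n = 1 + 2 * (8*z^4 + 8*z^2 + 8*z)"
  define v where "v = 8*z^3 - 3*z^2 - 4*z - 1"
  have num: "dup_num (2 * z) = n" and den: "dup_den (2 * z) = 2^2 * v"
    unfolding dup_num_def dup_den_def n_def v_def by algebra+
  have "two_integral (8*z^4 + 8*z^2 + 8*z)"
    using assms(1) by (intro two_integral_add two_integral_mult two_integral_power) simp_all
  then have "two_unit n"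
    unfolding n_def two_unit_iff by blast
  moreover have "two_integral v"
    unfolding v_def using assms(1)
    by (intro two_integral_diff two_integral_mult two_integral_power) simp_all
  moreover have "v \<noteq> 0"
    using assms(2) den by simp
  ultimately show ?thesis
    using two_pole_divide[of 2 n v] unfolding dup_map_def num den by auto
qed

lemma dup_map_unit:
  assumes "two_unit w"
  shows "\<exists>z. two_integral z \<and> dup_map w = 2 * z"
proof -
  obtain z where z: "two_integral z" "w = 1 + 2*z"
    using assms two_unit_iff by blast
  define n where "n = 1 + 4*z + 12*z^2 + 16*z^3 + 8*z^4 + 2*w^2 + 4*w"
  define d where "d = - 3 * w^2 + 2 * (2*w^3 - 4*w - 2)"
  have num: "dup_num w = 2 * n"
    unfolding dup_num_def n_def using z(2) by algebra
  have den: "dup_den w = d"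
    unfolding dup_den_def d_def by (simp add: algebra_simps)
  have "two_unit d"
    unfolding d_def using assms two_unit_of_odd[of 3] two_unit_imp_integral[OF assms]
    by (intro two_unit_add_even two_unit_mult two_unit_minus two_unit_power two_integral_diff
      two_integral_mult two_integral_power) simp_all
  moreover have "two_integral n"
    unfolding n_def using z(1) two_unit_imp_integral[OF assms]
    by (intro two_integral_add two_integral_mult two_integral_power) simp_all
  ultimately show ?thesis
    unfolding dup_map_def num den by (metis two_integral_divide_unit times_divide_eq_right)
qed

lemma dup_map_twice_two_pole:
  assumes "dup_den w \<noteq> 0" "dup_den (dup_map w) \<noteq> 0"
  shows "\<exists>k. two_pole k (dup_map (dup_map w))"
proof -
  have "(\<exists>k. two_pole k w) \<or> (\<exists>z. two_integral z \<and> w = 2 * z) \<or> two_unit w"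
  proof (cases "w = 0")
    case True
    then show ?thesis
      by (intro disjI2 disjI1 exI[of _ 0]) simp
  next
    case False
    then show ?thesis
      using rat_two_adic_cases[of w] two_integral_cases[of w] by blast
  qed
  then consider (pole) k where "two_pole k w" | (even) z where "two_integral z" "w = 2 * z"
    | (unit) "two_unit w"
    by blast
  then show ?thesis
  proof cases
    case pole
    then obtain k' where "two_pole k' (dup_map w)"
      using dup_map_two_pole assms(1) by blast
    then show ?thesis
      using dup_map_two_pole assms(2) by blast
  next
    case even
    then obtain k' where "two_pole k' (dup_map w)"
      using dup_map_even assms(1) by blast
    then show ?thesis
      using dup_map_two_pole assms(2) by blast
  next
    case unit
    then obtain z where "two_integral z" "dup_map w = 2 * z"
      using dup_map_unit by blast
    then show ?thesis
      using dup_map_even[of z] assms(2) by simp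
  qed
qed

lemma dup_orbit_inj:
  assumes orbit: "\<And>j. ws (Suc j) = dup_map (ws j)" and den: "\<And>j. dup_den (ws j) \<noteq> 0"
  shows "inj ws"
proof -
  have grows: "\<exists>k'>k. two_pole k' (ws (i + Suc m))" if "two_pole k (ws i)" for k i m
  proof (induction m)
    case 0
    show ?case
      using dup_map_two_pole[OF that den] orbit by simp
  next
    case (Suc m)
    then obtain k' where "k' > k" "two_pole k' (ws (i + Suc m))"
      by blast
    moreover obtain k'' where "k'' > k'" "two_pole k'' (ws (i + Suc (Suc m)))"
      using dup_map_two_pole[OF calculation(2) den] orbit[of "i + Suc m"] by auto
    ultimately show ?case
      by (intro exI[of _ k'']) simp
  qed
  have "ws i \<noteq> ws (i + Suc m)" for i m
  proof
    assume "ws i = ws (i + Suc m)"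
    then have eq: "ws (Suc (Suc i)) = ws (Suc (Suc i) + Suc m)"
      using orbit by simp
    obtain k where k: "two_pole k (ws (Suc (Suc i)))"
      using dup_map_twice_two_pole[OF den[of i]] den[of "Suc i"] orbit by auto
    then obtain k' where "k' > k" "two_pole k' (ws (Suc (Suc i)))"
      using grows[OF k, of m] eq by auto
    then show False
      using two_pole_unique[OF k] by simp
  qed
  then have "ws i \<noteq> ws j" if "i < j" for i j
    using less_imp_Suc_add[OF that] by auto
  then show ?thesis
    by (metis injI linorder_neqE_nat)
qed

section \<open>The quadratic twist\<close>

lemma rat_square_neq_7: "(t::rat)^2 \<noteq> 7"
proof
  assume h: "t^2 = 7"
  obtain p q where pq: "quotient_of t = (p, q)"
    by (cases "quotient_of t")
  have "q > 0" "coprime p q" "t = of_int p / of_int q"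
    using quotient_of_denom_pos[OF pq] quotient_of_coprime[OF pq] quotient_of_div[OF pq] by auto
  with h have "(of_int (p^2) :: rat) = of_int (7 * q^2)"
    by (simp add: field_simps power2_eq_square)
  then have e: "p^2 = 7 * q^2"
    by (simp only: of_int_eq_iff)
  have prime7: "prime (7::int)"
    by simp
  have "7 dvd p"
    using e prime_dvd_power[OF prime7, of p 2] by simp
  then obtain k where "p = 7 * k" ..
  with e have "q^2 = 7 * k^2"
    by (simp add: power2_eq_square)
  then have "7 dvd q"
    using prime_dvd_power[OF prime7, of q 2] by simp
  with \<open>7 dvd p\<close> \<open>coprime p q\<close> show False
    using coprime_common_divisor[of p q 7] by simp
qed

lemma ec_rhs_twist_root:
  assumes "(D::rat) \<noteq> 0" "ec_rhs (- 35 * D^2) (- 98 * D^3) x = 0"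
  shows "x = 7 * D"
proof -
  have "ec_rhs (- 35 * D^2) (- 98 * D^3) x = (x - 7*D) * ((x + 7*D/2)^2 + 7*D^2/4)"
    unfolding ec_rhs_def by (simp add: field_simps power2_eq_square power3_eq_cube)
  moreover have "(x + 7*D/2)^2 + 7*D^2/4 > 0"
    using assms(1) by (simp add: add_nonneg_pos)
  ultimately show ?thesis
    using assms(2) by simp
qed

lemma twist_nonsingular:
  "(D::rat) \<noteq> 0 \<Longrightarrow> 4 * (- 35 * D^2)^3 + 27 * (- 98 * D^3)^2 \<noteq> 0"
  by (simp add: power_mult_distrib flip: power_mult)

lemma twist_two_torsion:
  assumes D: "(D::rat) \<noteq> 0" and P: "on_curve (- 35 * D^2) (- 98 * D^3) P"
    and "P \<noteq> None" "ec_double (- 35 * D^2) P = None"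
  shows "P = Some (7 * D, 0)"
proof -
  obtain x y where xy: "P = Some (x, y)"
    using \<open>P \<noteq> None\<close> by auto
  then have c: "y^2 = ec_rhs (- 35 * D^2) (- 98 * D^3) x"
    using P by simp
  then have "y = 0"
    using assms(4) ec_add_eq_None_iff[OF c c] xy unfolding ec_double_def by simp
  then show ?thesis
    using ec_rhs_twist_root[OF D] c xy by simp
qed

lemma twist_not_double:
  assumes D: "(D::rat) \<noteq> 0" and R: "on_curve (- 35 * D^2) (- 98 * D^3) R"
  shows "ec_double (- 35 * D^2) R \<noteq> Some (7 * D, 0)"
proof
  assume h: "ec_double (- 35 * D^2) R = Some (7 * D, 0)"
  then obtain x y where R_xy: "R = Some (x, y)"
    unfolding ec_double_def by (cases R) auto
  then have c: "y^2 = ec_rhs (- 35 * D^2) (- 98 * D^3) x"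
    using R by simp
  have "y \<noteq> 0"
    using h R_xy ec_add_opposite[of _ x 0] unfolding ec_double_def by auto
  define l where "l = (3 * x^2 + (- 35 * D^2)) / (2 * y)"
  have "ec_add (- 35 * D^2) (Some (x, y)) (Some (x, y)) = Some (7 * D, 0)"
    using h R_xy unfolding ec_double_def by simp
  then have "l^2 - 2*x = 7*D"
    unfolding ec_add_tangent[OF \<open>y \<noteq> 0\<close>] Let_def l_def[symmetric] by simp
  moreover have "l * (2*y) = 3 * x^2 - 35 * D^2"
    unfolding l_def using \<open>y \<noteq> 0\<close> by simp
  ultimately have "(3 * x^2 - 35 * D^2)^2 = (2*x + 7*D) * (4 * ec_rhs (- 35 * D^2) (- 98 * D^3) x)"
    using c by algebra
  then have "(x^2 - 14*D*x - 63*D^2)^2 = 0"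
    unfolding ec_rhs_def by algebra
  then have "x^2 - 14*D*x - 63*D^2 = 0"
    by simp
  then have "((x - 7*D) / (4*D))^2 = 7"
    using D by (simp add: field_simps power2_eq_square)
  then show False
    using rat_square_neq_7 by blast
qed

lemma twist_double_dup_map:
  assumes D: "(D::rat) \<noteq> 0" and c: "y^2 = ec_rhs (- 35 * D^2) (- 98 * D^3) x" and "y \<noteq> 0"
    and h: "ec_double (- 35 * D^2) (Some (x, y)) = Some (x', y')"
  shows "dup_den ((x + D) / (4*D)) \<noteq> 0" "(x' + D) / (4*D) = dup_map ((x + D) / (4*D))"
proof -
  define F where "F = ec_rhs (- 35 * D^2) (- 98 * D^3) x"
  define l where "l = (3 * x^2 + (- 35 * D^2)) / (2 * y)"
  have "F \<noteq> 0"
    using c \<open>y \<noteq> 0\<close> unfolding F_def by auto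
  have x': "x' = l^2 - 2*x"
    using h unfolding ec_double_def ec_add_tangent[OF \<open>y \<noteq> 0\<close>] Let_def l_def[symmetric] by auto
  have den: "dup_den ((x + D) / (4*D)) = F / (16 * D^3)"
    unfolding dup_den_def F_def ec_rhs_def using D by (simp add: field_simps) algebra
  then show "dup_den ((x + D) / (4*D)) \<noteq> 0"
    using \<open>F \<noteq> 0\<close> D by simp
  have num: "dup_num ((x + D) / (4*D))
      = ((3 * x^2 - 35 * D^2)^2 - 8*x*F + 4*D*F) / (256 * D^4)"
    unfolding dup_num_def F_def ec_rhs_def using D by (simp add: field_simps) algebra
  have "(x' + D) / (4*D) = ((3 * x^2 - 35 * D^2)^2 / (4 * F) - 2*x + D) / (4*D)"
    unfolding x' l_def F_def c[symmetric] by (simp add: power_divide power_mult_distrib)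
  also have "\<dots> = dup_map ((x + D) / (4*D))"
    unfolding dup_map_def num den using \<open>F \<noteq> 0\<close> D by (simp add: field_simps) algebra
  finally show "(x' + D) / (4*D) = dup_map ((x + D) / (4*D))" .
qed

lemma twist_doubling_orbit_inj:
  assumes D: "(D::rat) \<noteq> 0" and P: "on_curve (- 35 * D^2) (- 98 * D^3) P"
    and affine: "\<And>j. (ec_double (- 35 * D^2) ^^ j) P \<noteq> None"
  shows "inj (\<lambda>j. (ec_double (- 35 * D^2) ^^ j) P)"
proof -
  define R where "R j = (ec_double (- 35 * D^2) ^^ j) P" for j
  define X Y where "X j = fst (the (R j))" and "Y j = snd (the (R j))" for j
  have R: "R j = Some (X j, Y j)" for j
    using affine[of j] unfolding R_def X_def Y_def by auto
  have "on_curve (- 35 * D^2) (- 98 * D^3) (R j)" for j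
    unfolding R_def using P by (induction j) (simp_all add: ec_double_def ec_add_closed)
  then have c: "Y j ^ 2 = ec_rhs (- 35 * D^2) (- 98 * D^3) (X j)" for j
    using R by simp
  have "Y j \<noteq> 0" for j
    using affine[of "Suc j"] R[of j] ec_add_opposite[of _ "X j" 0]
    unfolding R_def ec_double_def by auto
  moreover have "ec_double (- 35 * D^2) (Some (X j, Y j)) = Some (X (Suc j), Y (Suc j))" for j
    using R[of j] R[of "Suc j"] unfolding R_def by simp
  ultimately have "inj (\<lambda>j. (X j + D) / (4*D))"
    using twist_double_dup_map[OF D c] by (intro dup_orbit_inj) blast+
  then show ?thesis
    using inj_on_imageI2[of "\<lambda>Q. (fst (the Q) + D) / (4*D)" R UNIV]
    unfolding R_def[symmetric] X_def by (simp add: comp_def)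
qed

lemma twist_doubling_reaches_zero:
  assumes D: "(D::rat) \<noteq> 0" and "on_curve (- 35 * D^2) (- 98 * D^3) P"
    and "(ec_double (- 35 * D^2) ^^ j) P = None"
  shows "P = None \<or> P = Some (7 * D, 0)"
  using assms(2,3)
proof (induction j arbitrary: P)
  case (Suc j)
  have "on_curve (- 35 * D^2) (- 98 * D^3) (ec_double (- 35 * D^2) P)"
    using Suc.prems(1) by (simp add: ec_double_def ec_add_closed)
  moreover have "(ec_double (- 35 * D^2) ^^ j) (ec_double (- 35 * D^2) P) = None"
    using Suc.prems(2) by (simp only: funpow_Suc_right o_apply)
  ultimately have "ec_double (- 35 * D^2) P = None \<or> ec_double (- 35 * D^2) P = Some (7 * D, 0)"
    using Suc.IH by blast
  then show ?case
    using twist_two_torsion[OF D Suc.prems(1)] twist_not_double[OF D Suc.prems(1)] by blast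
qed simp

lemma twist_torsion:
  assumes D: "(D::rat) \<noteq> 0"
  shows "ec_torsion (- 35 * D^2) (- 98 * D^3) = {None, Some (7 * D, 0)}"
proof (intro equalityI subsetI)
  fix P :: ec_point
  assume "P \<in> ec_torsion (- 35 * D^2) (- 98 * D^3)"
  then obtain n where P: "on_curve (- 35 * D^2) (- 98 * D^3) P" and "n > 0"
    and "ec_mult (- 35 * D^2) n P = None"
    unfolding ec_torsion_def by blast
  then have "finite (range (\<lambda>j. (ec_double (- 35 * D^2) ^^ j) P))"
    using finite_doubling_orbit twist_nonsingular[OF D] by blast
  then obtain j where "(ec_double (- 35 * D^2) ^^ j) P = None"
    using twist_doubling_orbit_inj[OF D P] finite_imageD by blast
  then show "P \<in> {None, Some (7 * D, 0)}"
    using twist_doubling_reaches_zero[OF D P] by blast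
next
  fix P :: ec_point
  assume "P \<in> {None, Some (7 * D, 0)}"
  moreover have "on_curve (- 35 * D^2) (- 98 * D^3) (Some (7 * D, 0))"
    unfolding on_curve_Some ec_rhs_def by (simp add: algebra_simps power3_eq_cube power2_eq_square)
  moreover have "ec_mult (- 35 * D^2) 2 (Some (7 * D, 0)) = None"
    using ec_add_opposite[of _ "7 * D" 0] by (simp add: numeral_2_eq_2)
  ultimately show "P \<in> ec_torsion (- 35 * D^2) (- 98 * D^3)"
    unfolding ec_torsion_def by (auto intro: exI[of _ 1] exI[of _ 2])
qed

theorem lemmaA1:
  fixes d :: int
  assumes "squarefree d"
  shows "ec_torsion (- 35 * (of_int d)^2) (- 98 * (of_int d)^3)
           = {None, Some (7 * of_int d, 0)}"
proof -
  \<comment> \<open>Squarefreeness is used only through \<open>d \<noteq> 0\<close>.\<close>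
  have "(of_int d :: rat) \<noteq> 0"
    using assms by auto
  from twist_torsion[OF this] show ?thesis .
qed

end
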